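(* Let $x$ be a reference grid point in $\Omega=(-1,1)$ and $\phi$ a twice differentiable function defined in a neighborhood of the grid. Assume $K=\mathcal O(h^{-\alpha})$ and $L=\mathcal O(h^{-\beta})$ with $K\sqrt L\ge1$, $\alpha\in(0,1)$ and $\beta\in(0,2)$. Then the scheme $F^{1D,e,\delta}$ is consistent with $F^{1D}$ and has accuracy \[ F^{1D,e,\delta}[\phi](x)-F^{1D}[\phi](x)=\mathcal O\left(h^{1-\alpha}+h^{2-\beta}+h^{\min(2\alpha,\beta/2)}\right). \] Moreover, the optimal choice of $\alpha$ and $\beta$ (maximizing the resulting order) is $\alpha=1/3$, $\beta=4/3$, in which case the accuracy is $\mathcal O(h^{2/3})$.
   Context: $F^{1D}[u]=(u_x^2u_{xx})^{1/3}$ (real cube root). With $A(p,q)=(p^2q)^{1/3}$, $A^\delta(p,q)=\operatorname{sgn}(q)\min(\lvert A(p,q)\rvert,K\lvert p\rvert,L\lvert q\rvert)$ ($\operatorname{sgn}(0)=0$), $A^{\delta,\pm}(p,q)=A^\delta(p^\pm,q^\pm)$ where $x^+=\max(x,0)$, $x^-=\min(x,0)$, the scheme on the uniform grid of spacing $h$ is $-F^{1D,e,\delta}[u]=A^{\delta,+}(\lvert u_x^h\rvert^+,-u_{xx}^h)+A^{\delta,-}(-\lvert u_x^h\rvert^-,-u_{xx}^h)$, with $\lvert u_x^h\rvert^+=\max\{\frac{u(x)-u(x+h)}h,\frac{u(x)-u(x-h)}h,0\}$, $-\lvert u_x^h\rvert^-=\min\{\frac{u(x)-u(x+h)}h,\frac{u(x)-u(x-h)}h,0\}$,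 $u_{xx}^h=\frac{u(x+h)-2u(x)+u(x-h)}{h^2}$. Consistency with $F$ means $\lim_{h\to0,\,y\to x}F^h[\phi](y)=F[\phi](x)$ for smooth $\phi$.
   Formalization: $\phi$ is infinitely differentiable on an open neighbourhood of x instead of twice differentiable, and K and L are positive, with K between constant multiples of $h^{-\alpha}$ and L between constant multiples of $h^{-\beta}$ for small h. Apart from conventions, each condition added here is assumed in the paper as well or is needed for the statement above to hold. *)

theory Defs
  imports "HOL-Analysis.Analysis" "HOL-Library.Landau_Symbols"
begin

definition F1D :: "(real \<Rightarrow> real) \<Rightarrow> real \<Rightarrow> real" where
  "F1D u x = root 3 ((deriv u x)^2 * deriv (deriv u) x)"

definition Aop :: "real \<Rightarrow> real \<Rightarrow> real" where
  "Aop p q = root 3 (p^2 * q)"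

definition Adelta :: "real \<Rightarrow> real \<Rightarrow> real \<Rightarrow> real \<Rightarrow> real" where
  "Adelta K L p q = sgn q * min \<bar>Aop p q\<bar> (min (K * \<bar>p\<bar>) (L * \<bar>q\<bar>))"

definition ppart :: "real \<Rightarrow> real" where "ppart x = max x 0"
definition npart :: "real \<Rightarrow> real" where "npart x = min x 0"

definition Adelta_plus :: "real \<Rightarrow> real \<Rightarrow> real \<Rightarrow> real \<Rightarrow> real" where
  "Adelta_plus K L p q = Adelta K L (ppart p) (ppart q)"
definition Adelta_minus :: "real \<Rightarrow> real \<Rightarrow> real \<Rightarrow> real \<Rightarrow> real" where
  "Adelta_minus K L p q = Adelta K L (npart p) (npart q)"

definition ux_abs_plus :: "(real \<Rightarrow> real) \<Rightarrow> real \<Rightarrow> real \<Rightarrow> real" where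
  "ux_abs_plus u h x = max (max ((u x - u (x + h)) / h) ((u x - u (x - h)) / h)) 0"

definition ux_abs_minus_neg :: "(real \<Rightarrow> real) \<Rightarrow> real \<Rightarrow> real \<Rightarrow> real" where
  "ux_abs_minus_neg u h x = min (min ((u x - u (x + h)) / h) ((u x - u (x - h)) / h)) 0"

definition uxx :: "(real \<Rightarrow> real) \<Rightarrow> real \<Rightarrow> real \<Rightarrow> real" where
  "uxx u h x = (u (x + h) - 2 * u x + u (x - h)) / h^2"

definition Fscheme :: "real \<Rightarrow> real \<Rightarrow> real \<Rightarrow> (real \<Rightarrow> real) \<Rightarrow> real \<Rightarrow> real" where
  "Fscheme K L h u x =
     - (Adelta_plus K L (ux_abs_plus u h x) (- uxx u h x)
        + Adelta_minus K L (ux_abs_minus_neg u h x) (- uxx u h x))"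

definition smooth_on :: "(real \<Rightarrow> real) \<Rightarrow> real set \<Rightarrow> bool" where
  "smooth_on f U \<longleftrightarrow> (\<forall>k. \<forall>y\<in>U. ((deriv ^^ k) f) differentiable (at y))"

text \<open>Order of accuracy of the error bound h^(1-a) + h^(2-b) + h^min(2a, b/2).\<close>
definition acc_order :: "real \<Rightarrow> real \<Rightarrow> real" where
  "acc_order a b = min (1 - a) (min (2 - b) (min (2 * a) (b / 2)))"

end

theory Submission
  imports Defs
begin

(*
  Taylor expansion shows that the one-sided difference quotients at x are -\<phi>'(x) + O(h) and
  \<phi>'(x) + O(h), locally uniformly in x, and that the centred second difference is \<phi>''(x) + O(h^2).
  Hence |u_x^h|^+ and |u_x^h|^- tend to |\<phi>'(x)| and u_xx^h tends to \<phi>''(x).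
  If \<phi>'(x) \<phi>''(x) \<noteq> 0, then, as K and L tend to infinity, the truncations by K|p| and L|q| are
  eventually inactive and exactly one of the two terms of the scheme survives: the cube root of
  (discrete gradient)^2 times the second difference, which is O(h)-close to (\<phi>'^2 \<phi>'')^(1/3) because
  the cube root is Lipschitz away from 0. If \<phi>'(x) = 0, the truncation K|p| bounds the scheme by
  O(K h) = O(h^(1-\<alpha>)); if \<phi>''(x) = 0, the truncation L|q| bounds it by O(L h^2) = O(h^(2-\<beta>)).
*)

section \<open>Taylor estimates for the finite differences\<close>

lemma taylor_expansion_near:
  fixes f :: "real \<Rightarrow> real"
  assumes derivs: "\<And>k t. \<bar>t - y\<bar> \<le> r \<Longrightarrow> DERIV ((deriv^^k) f) t :> (deriv^^Suc k) f t"
    and "\<bar>s\<bar> \<le> r" "s \<noteq> 0" "0 < n"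
  obtains t where "\<bar>t - y\<bar> \<le> r"
    "f (y + s) = (\<Sum>m<n. (deriv^^m) f y / fact m * s^m) + (deriv^^n) f t / fact n * s^n"
proof -
  have "\<forall>m t. m < n \<and> y - r \<le> t \<and> t \<le> y + r \<longrightarrow>
      DERIV ((\<lambda>k. (deriv^^k) f) m) t :> (\<lambda>k. (deriv^^k) f) (Suc m) t"
    using derivs by (simp add: abs_le_iff)
  from Taylor[of n "\<lambda>k. (deriv^^k) f" f, OF \<open>0 < n\<close> _ this, of y "y + s"] assms(2,3)
  obtain t where "if y + s < y then y + s < t \<and> t < y else y < t \<and> t < y + s"
    "f (y + s) = (\<Sum>m<n. (deriv^^m) f y / fact m * (y + s - y)^m) + (deriv^^n) f t / fact n * (y + s - y)^n"
    by (auto simp: abs_le_iff)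
  with assms(2) show thesis by (intro that[of t]) (auto split: if_splits)
qed

lemma difference_quotient_errors:
  fixes f :: "real \<Rightarrow> real"
  assumes "0 < h"
    and derivs: "\<And>k t. \<bar>t - y\<bar> \<le> h \<Longrightarrow> DERIV ((deriv^^k) f) t :> (deriv^^Suc k) f t"
    and bound2: "\<And>t. \<bar>t - y\<bar> \<le> h \<Longrightarrow> \<bar>(deriv^^2) f t\<bar> \<le> M"
    and bound4: "\<And>t. \<bar>t - y\<bar> \<le> h \<Longrightarrow> \<bar>(deriv^^4) f t\<bar> \<le> M"
  shows "\<bar>(f y - f (y + h)) / h + deriv f y\<bar> \<le> M * h"
    and "\<bar>(f y - f (y - h)) / h - deriv f y\<bar> \<le> M * h"
    and "\<bar>uxx f h y - (deriv^^2) f y\<bar> \<le> M * h^2"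
proof -
  have sum2: "(\<Sum>m<2. g m) = g 0 + g 1" and sum4: "(\<Sum>m<4. g m) = g 0 + g 1 + g 2 + g 3"
    for g :: "nat \<Rightarrow> real" by (simp_all add: eval_nat_numeral)
  have step: "\<bar>h\<bar> \<le> h" "\<bar>-h\<bar> \<le> h" "h \<noteq> 0" "-h \<noteq> 0" using \<open>0 < h\<close> by auto
  obtain t1 where t1: "\<bar>t1 - y\<bar> \<le> h" "f (y + h) = f y + deriv f y * h + (deriv^^2) f t1 / 2 * h^2"
    using taylor_expansion_near[OF derivs step(1,3), where n=2] by (auto simp: sum2)
  obtain t2 where t2: "\<bar>t2 - y\<bar> \<le> h" "f (y - h) = f y - deriv f y * h + (deriv^^2) f t2 / 2 * h^2"
    using taylor_expansion_near[OF derivs step(2,4), where n=2] by (auto simp: sum2)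
  obtain t3 where t3: "\<bar>t3 - y\<bar> \<le> h" "f (y + h) = (\<Sum>m<4. (deriv^^m) f y / fact m * h^m) + (deriv^^4) f t3 / 24 * h^4"
    using taylor_expansion_near[OF derivs step(1,3), where n=4] by (auto simp: fact_numeral)
  obtain t4 where t4: "\<bar>t4 - y\<bar> \<le> h" "f (y - h) = (\<Sum>m<4. (deriv^^m) f y / fact m * (-h)^m) + (deriv^^4) f t4 / 24 * h^4"
    using taylor_expansion_near[OF derivs step(2,4), where n=4] by (auto simp: fact_numeral)
  have "(f y - f (y + h)) / h + deriv f y = - ((deriv^^2) f t1 / 2) * h"
    using t1(2) \<open>0 < h\<close> by (simp add: field_simps power2_eq_square)
  then show "\<bar>(f y - f (y + h)) / h + deriv f y\<bar> \<le> M * h"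
    using bound2[OF t1(1)] \<open>0 < h\<close> by (simp add: abs_mult)
  have "(f y - f (y - h)) / h - deriv f y = - ((deriv^^2) f t2 / 2) * h"
    using t2(2) \<open>0 < h\<close> by (simp add: field_simps power2_eq_square)
  then show "\<bar>(f y - f (y - h)) / h - deriv f y\<bar> \<le> M * h"
    using bound2[OF t2(1)] \<open>0 < h\<close> by (simp add: abs_mult)
  have expansion: "uxx f h y - (deriv^^2) f y = ((deriv^^4) f t3 + (deriv^^4) f t4) / 24 * h^2"
    using t3(2) t4(2) \<open>0 < h\<close> unfolding uxx_def by (simp add: sum4 field_simps eval_nat_numeral)
  have "\<bar>uxx f h y - (deriv^^2) f y\<bar> = \<bar>(deriv^^4) f t3 + (deriv^^4) f t4\<bar> / 24 * h^2"
    unfolding expansion by (simp add: abs_mult)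
  also have "\<dots> \<le> M * h^2"
    using bound4[OF t3(1)] bound4[OF t4(1)] by (intro mult_right_mono) auto
  finally show "\<bar>uxx f h y - (deriv^^2) f y\<bar> \<le> M * h^2" .
qed

lemma max_min_zero_lipschitz:
  fixes a b a' b' e :: real
  assumes "\<bar>a - a'\<bar> \<le> e" "\<bar>b - b'\<bar> \<le> e"
  shows "\<bar>max (max a b) 0 - max (max a' b') 0\<bar> \<le> e"
    and "\<bar>min (min a b) 0 - min (min a' b') 0\<bar> \<le> e"
  using assms by (auto simp: max_def min_def abs_le_iff)

lemma upwind_gradient_errors:
  assumes "\<bar>(u y - u (y + h)) / h + p\<bar> \<le> e" and "\<bar>(u y - u (y - h)) / h - p\<bar> \<le> e"
  shows "\<bar>ux_abs_plus u h y - \<bar>p\<bar>\<bar> \<le> e" and "\<bar>- ux_abs_minus_neg u h y - \<bar>p\<bar>\<bar> \<le> e"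
proof -
  have "\<bar>(u y - u (y + h)) / h - (- p)\<bar> \<le> e" using assms(1) by simp
  note lipschitz = max_min_zero_lipschitz[OF this assms(2)]
  have abs_p: "max (max (- p) p) 0 = \<bar>p\<bar>" "min (min (- p) p) 0 = - \<bar>p\<bar>" by auto
  show "\<bar>ux_abs_plus u h y - \<bar>p\<bar>\<bar> \<le> e"
    using lipschitz(1) unfolding ux_abs_plus_def abs_p .
  have "\<bar>- ux_abs_minus_neg u h y - \<bar>p\<bar>\<bar> = \<bar>ux_abs_minus_neg u h y - (- \<bar>p\<bar>)\<bar>" by linarith
  then show "\<bar>- ux_abs_minus_neg u h y - \<bar>p\<bar>\<bar> \<le> e"
    using lipschitz(2) unfolding ux_abs_minus_neg_def abs_p by linarith
qed

lemma smooth_on_DERIV: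
  assumes "smooth_on f V" "t \<in> V"
  shows "DERIV ((deriv^^k) f) t :> (deriv^^Suc k) f t"
  using assms unfolding smooth_on_def by (simp add: DERIV_deriv_iff_real_differentiable)

lemma smooth_on_isCont:
  assumes "smooth_on f V" "t \<in> V"
  shows "isCont ((deriv^^k) f) t"
  using assms unfolding smooth_on_def by (blast intro: differentiable_imp_continuous_within)

lemma isCont_locally_bounded:
  fixes g :: "real \<Rightarrow> real"
  assumes "isCont g z"
  obtains d where "d > 0" "\<And>t. \<bar>t - z\<bar> < d \<Longrightarrow> \<bar>g t\<bar> \<le> \<bar>g z\<bar> + 1"
proof -
  obtain d where "d > 0" and close: "\<And>t. t \<noteq> z \<Longrightarrow> \<bar>t - z\<bar> < d \<Longrightarrow> \<bar>g t - g z\<bar> < 1"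
    using LIM_D[OF assms[unfolded isCont_def] zero_less_one] by auto
  have "\<bar>g t\<bar> \<le> \<bar>g z\<bar> + 1" if "\<bar>t - z\<bar> < d" for t
    using close[OF _ that] by (cases "t = z") auto
  with \<open>d > 0\<close> show thesis by (rule that)
qed

definition finite_difference_errors_le :: "(real \<Rightarrow> real) \<Rightarrow> real \<Rightarrow> real \<Rightarrow> real \<Rightarrow> bool" where
  "finite_difference_errors_le f M h y \<longleftrightarrow>
     \<bar>ux_abs_plus f h y - \<bar>deriv f y\<bar>\<bar> \<le> M * h \<and> \<bar>- ux_abs_minus_neg f h y - \<bar>deriv f y\<bar>\<bar> \<le> M * h
     \<and> \<bar>uxx f h y - (deriv^^2) f y\<bar> \<le> M * h^2"

lemma finite_difference_errors_locally:
  fixes f :: "real \<Rightarrow> real"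
  assumes "smooth_on f V" "open V" "z \<in> V"
  obtains d M where "d > 0" "M \<ge> 0"
    "\<And>y h. 0 < h \<Longrightarrow> \<bar>y - z\<bar> + h < d \<Longrightarrow> finite_difference_errors_le f M h y"
proof -
  obtain e where e: "e > 0" "ball z e \<subseteq> V" using assms(2,3) open_contains_ball by blast
  obtain d2 where d2: "d2 > 0" "\<And>t. \<bar>t - z\<bar> < d2 \<Longrightarrow> \<bar>(deriv^^2) f t\<bar> \<le> \<bar>(deriv^^2) f z\<bar> + 1"
    using isCont_locally_bounded[OF smooth_on_isCont[OF assms(1,3)]] by blast
  obtain d4 where d4: "d4 > 0" "\<And>t. \<bar>t - z\<bar> < d4 \<Longrightarrow> \<bar>(deriv^^4) f t\<bar> \<le> \<bar>(deriv^^4) f z\<bar> + 1"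
    using isCont_locally_bounded[OF smooth_on_isCont[OF assms(1,3)]] by blast
  define M where "M = \<bar>(deriv^^2) f z\<bar> + \<bar>(deriv^^4) f z\<bar> + 1"
  show thesis
  proof (rule that[of "min e (min d2 d4)" M])
    show "min e (min d2 d4) > 0" "M \<ge> 0" using e d2 d4 unfolding M_def by auto
  next
    fix y h assume h: "0 < h" "\<bar>y - z\<bar> + h < min e (min d2 d4)"
    have near: "\<bar>t - z\<bar> < min e (min d2 d4)" if "\<bar>t - y\<bar> \<le> h" for t
      using that h by linarith
    have "t \<in> V" if "\<bar>t - y\<bar> \<le> h" for t
      using e(2) near[OF that] by (auto simp: dist_real_def)
    then have derivs: "\<And>k t. \<bar>t - y\<bar> \<le> h \<Longrightarrow> DERIV ((deriv^^k) f) t :> (deriv^^Suc k) f t"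
      using smooth_on_DERIV[OF assms(1)] by blast
    have "\<bar>(deriv^^2) f t\<bar> \<le> M" "\<bar>(deriv^^4) f t\<bar> \<le> M" if "\<bar>t - y\<bar> \<le> h" for t
    proof -
      have "\<bar>t - z\<bar> < d2" "\<bar>t - z\<bar> < d4" using near[OF that] by auto
      from d2(2)[OF this(1)] d4(2)[OF this(2)]
      show "\<bar>(deriv^^2) f t\<bar> \<le> M" "\<bar>(deriv^^4) f t\<bar> \<le> M"
        unfolding M_def by (smt (verit) abs_ge_zero)+
    qed
    note errors = difference_quotient_errors[OF h(1) derivs this]
    show "finite_difference_errors_le f M h y"
      using upwind_gradient_errors[OF errors(1,2)] errors(3)
      unfolding finite_difference_errors_le_def by (intro conjI)
  qed
qed

section \<open>The scheme as a function of the discrete derivatives\<close>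

(* The scheme as a function of mp = |u_x^h|^+, mm = |u_x^h|^- (both nonnegative) and b = u_xx^h. *)
definition scheme_map :: "real \<Rightarrow> real \<Rightarrow> real \<Rightarrow> real \<Rightarrow> real \<Rightarrow> real" where
  "scheme_map K L mp mm b = - (Adelta K L mp (ppart (- b)) + Adelta K L (- mm) (npart (- b)))"

lemma Fscheme_eq_scheme_map:
  "Fscheme K L h u y = scheme_map K L (ux_abs_plus u h y) (- ux_abs_minus_neg u h y) (uxx u h y)"
proof -
  have "ppart (ux_abs_plus u h y) = ux_abs_plus u h y"
    unfolding ppart_def ux_abs_plus_def by simp
  moreover have "npart (ux_abs_minus_neg u h y) = ux_abs_minus_neg u h y"
    unfolding npart_def ux_abs_minus_neg_def by simp
  ultimately show ?thesis
    unfolding Fscheme_def scheme_map_def Adelta_plus_def Adelta_minus_def by simp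
qed

lemma abs_Aop: "\<bar>Aop p q\<bar> = root 3 (p^2 * \<bar>q\<bar>)"
  unfolding Aop_def by (simp add: real_root_abs[symmetric] abs_mult)

lemma abs_Adelta_le:
  assumes "K \<ge> 0" "L \<ge> 0"
  shows "\<bar>Adelta K L p q\<bar> \<le> root 3 (p^2 * \<bar>q\<bar>)"
    and "\<bar>Adelta K L p q\<bar> \<le> K * \<bar>p\<bar>"
    and "\<bar>Adelta K L p q\<bar> \<le> L * \<bar>q\<bar>"
proof -
  have "\<bar>Adelta K L p q\<bar> \<le> min \<bar>Aop p q\<bar> (min (K * \<bar>p\<bar>) (L * \<bar>q\<bar>))"
    using assms unfolding Adelta_def abs_mult by (auto simp: abs_sgn_eq)
  then show "\<bar>Adelta K L p q\<bar> \<le> root 3 (p^2 * \<bar>q\<bar>)"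
    and "\<bar>Adelta K L p q\<bar> \<le> K * \<bar>p\<bar>"
    and "\<bar>Adelta K L p q\<bar> \<le> L * \<bar>q\<bar>" unfolding abs_Aop by linarith+
qed

lemma Adelta_eq_Aop:
  assumes "\<bar>Aop p q\<bar> \<le> K * \<bar>p\<bar>" "\<bar>Aop p q\<bar> \<le> L * \<bar>q\<bar>"
  shows "Adelta K L p q = Aop p q"
proof -
  have "sgn q * \<bar>Aop p q\<bar> = Aop p q"
  proof (cases "q < 0")
    case True
    then have "Aop p q \<le> 0" unfolding Aop_def by (simp add: mult_nonneg_nonpos)
    with True show ?thesis by simp
  next
    case False
    then show ?thesis by (cases "q = 0") (auto simp: Aop_def)
  qed
  with assms show ?thesis unfolding Adelta_def by simp
qed

lemma abs_scheme_map_le: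
  assumes "K \<ge> 0" "L \<ge> 0"
  shows "\<bar>scheme_map K L mp mm b\<bar> \<le> root 3 (mp^2 * \<bar>b\<bar>) + root 3 (mm^2 * \<bar>b\<bar>)"
    and "\<bar>scheme_map K L mp mm b\<bar> \<le> K * \<bar>mp\<bar> + K * \<bar>mm\<bar>"
    and "\<bar>scheme_map K L mp mm b\<bar> \<le> 2 * L * \<bar>b\<bar>"
proof -
  have parts: "\<bar>ppart (- b)\<bar> \<le> \<bar>b\<bar>" "\<bar>npart (- b)\<bar> \<le> \<bar>b\<bar>"
    unfolding ppart_def npart_def by auto
  have triangle: "\<bar>scheme_map K L mp mm b\<bar>
      \<le> \<bar>Adelta K L mp (ppart (- b))\<bar> + \<bar>Adelta K L (- mm) (npart (- b))\<bar>"
    unfolding scheme_map_def by (simp add: abs_triangle_ineq)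
  note plus = abs_Adelta_le[OF assms, of mp "ppart (- b)"]
    and minus = abs_Adelta_le[OF assms, of "- mm" "npart (- b)"]
  have "root 3 (mp^2 * \<bar>ppart (- b)\<bar>) \<le> root 3 (mp^2 * \<bar>b\<bar>)"
    "root 3 ((- mm)^2 * \<bar>npart (- b)\<bar>) \<le> root 3 (mm^2 * \<bar>b\<bar>)"
    using parts by (simp_all add: mult_left_mono)
  with triangle plus(1) minus(1)
  show "\<bar>scheme_map K L mp mm b\<bar> \<le> root 3 (mp^2 * \<bar>b\<bar>) + root 3 (mm^2 * \<bar>b\<bar>)" by linarith
  show "\<bar>scheme_map K L mp mm b\<bar> \<le> K * \<bar>mp\<bar> + K * \<bar>mm\<bar>"
    using triangle plus(2) minus(2) by simp
  have "L * \<bar>ppart (- b)\<bar> \<le> L * \<bar>b\<bar>" "L * \<bar>npart (- b)\<bar> \<le> L * \<bar>b\<bar>"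
    using parts assms by (simp_all add: mult_left_mono)
  with triangle plus(3) minus(3) show "\<bar>scheme_map K L mp mm b\<bar> \<le> 2 * L * \<bar>b\<bar>" by linarith
qed

lemma scheme_map_unclipped:
  assumes "b \<noteq> 0" and m: "m = (if b < 0 then mp else mm)" "m \<ge> 0"
    and clip: "root 3 (m^2 * \<bar>b\<bar>) \<le> K * m" "root 3 (m^2 * \<bar>b\<bar>) \<le> L * \<bar>b\<bar>"
  shows "scheme_map K L mp mm b = root 3 (m^2 * b)"
proof (cases "b < 0")
  case True
  then have "ppart (- b) = - b" "npart (- b) = 0" unfolding ppart_def npart_def by auto
  moreover have "Adelta K L m (- b) = Aop m (- b)"
    using clip True \<open>m \<ge> 0\<close> by (intro Adelta_eq_Aop) (simp_all add: abs_Aop)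
  ultimately show ?thesis
    using True m(1) unfolding scheme_map_def Adelta_def Aop_def by (simp add: real_root_minus)
next
  case False
  then have "ppart (- b) = 0" "npart (- b) = - b" using \<open>b \<noteq> 0\<close> unfolding ppart_def npart_def by auto
  moreover have "Adelta K L (- m) (- b) = Aop (- m) (- b)"
    using clip \<open>m \<ge> 0\<close> by (intro Adelta_eq_Aop) (simp_all add: abs_Aop)
  ultimately show ?thesis
    using False m(1) unfolding scheme_map_def Adelta_def Aop_def by (simp add: real_root_minus)
qed

lemma root3_le_clipping_levels:
  fixes m n m0 n0 K L :: real
  defines "R \<equiv> root 3 ((m0 + 1)^2 * (n0 + 1))"
  assumes "0 < m0" "m0 / 2 \<le> m" "m \<le> m0 + 1" and "0 < n0" "n0 / 2 \<le> n" "n \<le> n0 + 1"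
    and "2 * R / m0 \<le> K" "2 * R / n0 \<le> L"
  shows "root 3 (m^2 * n) \<le> K * m" and "root 3 (m^2 * n) \<le> L * n"
proof -
  have "m^2 \<le> (m0 + 1)^2" using assms by (intro power_mono) auto
  then have "m^2 * n \<le> (m0 + 1)^2 * (n0 + 1)" using assms by (intro mult_mono) auto
  then have below_R: "root 3 (m^2 * n) \<le> R" unfolding R_def by simp
  have "R \<ge> 0" unfolding R_def using assms by simp
  then have "K \<ge> 0" "L \<ge> 0" using assms(2,5,8,9) by (meson divide_nonneg_pos mult_nonneg_nonneg order.trans zero_le_numeral)+
  have "R = 2 * R / m0 * (m0 / 2)" using assms by simp
  also have "\<dots> \<le> K * m" using assms \<open>R \<ge> 0\<close> \<open>K \<ge> 0\<close> by (intro mult_mono) simp_all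
  finally show "root 3 (m^2 * n) \<le> K * m" using below_R by linarith
  have "R = 2 * R / n0 * (n0 / 2)" using assms by simp
  also have "\<dots> \<le> L * n" using assms \<open>R \<ge> 0\<close> \<open>L \<ge> 0\<close> by (intro mult_mono) simp_all
  finally show "root 3 (m^2 * n) \<le> L * n" using below_R by linarith
qed

lemma eventually_near_nonzero_limit:
  fixes f :: "'a \<Rightarrow> real"
  assumes "(f \<longlongrightarrow> c) F" "c \<noteq> 0"
  shows "\<forall>\<^sub>F x in F. \<bar>c\<bar> / 2 \<le> \<bar>f x\<bar> \<and> \<bar>f x\<bar> \<le> \<bar>c\<bar> + 1 \<and> (f x < 0 \<longleftrightarrow> c < 0)"
proof -
  have "((\<lambda>x. \<bar>f x - c\<bar>) \<longlongrightarrow> 0) F"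
    using tendsto_rabs[OF tendsto_diff[OF assms(1) tendsto_const[of c]]] by simp
  then have "\<forall>\<^sub>F x in F. \<bar>f x - c\<bar> < min (\<bar>c\<bar> / 2) 1"
    using assms(2) by (intro order_tendstoD(2)) auto
  then show ?thesis by eventually_elim (auto simp: abs_if split: if_splits)
qed

lemma scheme_map_eventually_unclipped:
  fixes mp mm b K L :: "'a \<Rightarrow> real"
  assumes "(mp \<longlongrightarrow> \<bar>p\<bar>) F" "(mm \<longlongrightarrow> \<bar>p\<bar>) F" "(b \<longlongrightarrow> q) F"
    and "filterlim K at_top F" "filterlim L at_top F" and "p \<noteq> 0" "q \<noteq> 0"
  shows "\<forall>\<^sub>F x in F. scheme_map (K x) (L x) (mp x) (mm x) (b x)
    = root 3 ((if q < 0 then mp x else mm x)^2 * b x)"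
proof -
  define m where "m x = (if q < 0 then mp x else mm x)" for x
  define R where "R = root 3 ((\<bar>p\<bar> + 1)^2 * (\<bar>q\<bar> + 1))"
  have "(m \<longlongrightarrow> \<bar>p\<bar>) F" unfolding m_def using assms(1,2) by (cases "q < 0") simp_all
  from eventually_near_nonzero_limit[OF this] \<open>p \<noteq> 0\<close>
  have "\<forall>\<^sub>F x in F. \<bar>p\<bar> / 2 \<le> m x \<and> m x \<le> \<bar>p\<bar> + 1"
    by (auto elim!: eventually_mono)
  moreover have "\<forall>\<^sub>F x in F. \<bar>q\<bar> / 2 \<le> \<bar>b x\<bar> \<and> \<bar>b x\<bar> \<le> \<bar>q\<bar> + 1 \<and> (b x < 0 \<longleftrightarrow> q < 0)"
    using eventually_near_nonzero_limit[OF assms(3,7)] .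
  moreover have "\<forall>\<^sub>F x in F. 2 * R / \<bar>p\<bar> \<le> K x" "\<forall>\<^sub>F x in F. 2 * R / \<bar>q\<bar> \<le> L x"
    using assms(4,5) unfolding filterlim_at_top by auto
  ultimately show ?thesis
  proof eventually_elim
    case (elim x)
    have "\<bar>q\<bar> / 2 > 0" using \<open>q \<noteq> 0\<close> by simp
    then have "b x \<noteq> 0" and "m x \<ge> 0" using elim by auto
    moreover have "m x = (if b x < 0 then mp x else mm x)" using elim unfolding m_def by simp
    moreover have "root 3 ((m x)^2 * \<bar>b x\<bar>) \<le> K x * m x" "root 3 ((m x)^2 * \<bar>b x\<bar>) \<le> L x * \<bar>b x\<bar>"
      using root3_le_clipping_levels[of "\<bar>p\<bar>" "m x" "\<bar>q\<bar>" "\<bar>b x\<bar>"] elim assms(6,7)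
      unfolding R_def by auto
    ultimately show ?case unfolding m_def[symmetric] by (intro scheme_map_unclipped)
  qed
qed

lemma scheme_map_tendsto:
  fixes mp mm b K L :: "'a \<Rightarrow> real"
  assumes mp: "(mp \<longlongrightarrow> \<bar>p\<bar>) F" and mm: "(mm \<longlongrightarrow> \<bar>p\<bar>) F" and b: "(b \<longlongrightarrow> q) F"
    and K: "filterlim K at_top F" and L: "filterlim L at_top F"
  shows "((\<lambda>x. scheme_map (K x) (L x) (mp x) (mm x) (b x)) \<longlongrightarrow> root 3 (p^2 * q)) F"
proof (cases "p = 0 \<or> q = 0")
  case True
  have "((\<lambda>x. root 3 ((mp x)^2 * \<bar>b x\<bar>) + root 3 ((mm x)^2 * \<bar>b x\<bar>))
      \<longlongrightarrow> root 3 (\<bar>p\<bar>^2 * \<bar>q\<bar>) + root 3 (\<bar>p\<bar>^2 * \<bar>q\<bar>)) F"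
    by (intro tendsto_intros mp mm b)
  then have bound_to_0: "((\<lambda>x. root 3 ((mp x)^2 * \<bar>b x\<bar>) + root 3 ((mm x)^2 * \<bar>b x\<bar>)) \<longlongrightarrow> 0) F"
    using True by auto
  have "\<forall>\<^sub>F x in F. K x \<ge> 0 \<and> L x \<ge> 0"
    using K L unfolding filterlim_at_top by (auto intro: eventually_conj)
  then have "((\<lambda>x. scheme_map (K x) (L x) (mp x) (mm x) (b x)) \<longlongrightarrow> 0) F"
    by (intro Lim_null_comparison[OF _ bound_to_0]) (auto elim!: eventually_mono intro: abs_scheme_map_le)
  then show ?thesis using True by auto
next
  case False
  have "((\<lambda>x. if q < 0 then mp x else mm x) \<longlongrightarrow> \<bar>p\<bar>) F"
    using mp mm by (cases "q < 0") simp_all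
  then have "((\<lambda>x. root 3 ((if q < 0 then mp x else mm x)^2 * b x)) \<longlongrightarrow> root 3 (\<bar>p\<bar>^2 * q)) F"
    by (intro tendsto_intros b)
  then have "((\<lambda>x. root 3 ((if q < 0 then mp x else mm x)^2 * b x)) \<longlongrightarrow> root 3 (p^2 * q)) F"
    by simp
  then show ?thesis
  proof (rule Lim_transform_eventually)
    show "\<forall>\<^sub>F x in F. root 3 ((if q < 0 then mp x else mm x)^2 * b x)
        = scheme_map (K x) (L x) (mp x) (mm x) (b x)"
      using scheme_map_eventually_unclipped[OF mp mm b K L] False by (auto elim: eventually_mono)
  qed
qed

section \<open>Consistency\<close>

lemma tendsto_by_error_bound:
  fixes f g e :: "'a \<Rightarrow> real"
  assumes "(g \<longlongrightarrow> l) F" "(e \<longlongrightarrow> 0) F" "\<forall>\<^sub>F x in F. \<bar>f x - g x\<bar> \<le> e x"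
  shows "(f \<longlongrightarrow> l) F"
proof -
  have "((\<lambda>x. f x - g x) \<longlongrightarrow> 0) F"
    using assms(3) by (intro Lim_null_comparison[OF _ assms(2)]) simp
  from tendsto_add[OF this assms(1)] show ?thesis by simp
qed

lemma F1D_eq_root: "F1D u x = root 3 ((deriv u x)^2 * (deriv^^2) u x)"
  unfolding F1D_def by (simp add: numeral_2_eq_2)

lemma Fscheme_tendsto_F1D:
  assumes "smooth_on \<psi> V" "open V" "z \<in> V"
    and K: "filterlim K at_top (at_right 0)" and L: "filterlim L at_top (at_right 0)"
  shows "((\<lambda>(h, y). Fscheme (K h) (L h) h \<psi> y) \<longlongrightarrow> F1D \<psi> z) (at_right 0 \<times>\<^sub>F nhds z)"
proof -
  define F where "F = at_right (0::real) \<times>\<^sub>F nhds z"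
  obtain d M where "d > 0" "M \<ge> 0"
    and errors: "\<And>y h. 0 < h \<Longrightarrow> \<bar>y - z\<bar> + h < d \<Longrightarrow> finite_difference_errors_le \<psi> M h y"
    by (rule finite_difference_errors_locally[OF assms(1-3)]) (rule that)
  have "\<forall>\<^sub>F h in at_right 0. 0 < h \<and> h < d / 2" "\<forall>\<^sub>F y in nhds z. \<bar>y - z\<bar> < d / 2"
    using \<open>d > 0\<close> by (auto simp: eventually_at_right_field eventually_nhds_metric dist_real_def intro!: exI[of _ "d/2"])
  then have near: "\<forall>\<^sub>F x in F. 0 < fst x \<and> \<bar>snd x - z\<bar> + fst x < d"
    unfolding F_def by (auto elim: eventually_mono[OF eventually_prodI])
  have h_to_0: "(fst \<longlongrightarrow> 0) F" and y_to_z: "(snd \<longlongrightarrow> z) F"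
    unfolding F_def by (auto intro: filterlim_compose[OF tendsto_ident_at filterlim_fst] filterlim_snd)
  have derivs: "((\<lambda>x. (deriv^^k) \<psi> (snd x)) \<longlongrightarrow> (deriv^^k) \<psi> z) F" for k
    using isCont_tendsto_compose[OF smooth_on_isCont[OF assms(1,3)] y_to_z] .
  from derivs[of 1] have gradient: "((\<lambda>x. \<bar>deriv \<psi> (snd x)\<bar>) \<longlongrightarrow> \<bar>deriv \<psi> z\<bar>) F"
    by (simp add: tendsto_rabs)
  have "((\<lambda>x. (fst x)^2) \<longlongrightarrow> 0) F" using tendsto_power[OF h_to_0, of 2] by simp
  note Mh = tendsto_mult_right_zero[OF h_to_0, of M] and Mh2 = tendsto_mult_right_zero[OF this, of M]
  have "\<forall>\<^sub>F x in F. finite_difference_errors_le \<psi> M (fst x) (snd x)"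
    using near by eventually_elim (intro errors; simp)
  note bounds = this[unfolded finite_difference_errors_le_def]
  have "((\<lambda>x. ux_abs_plus \<psi> (fst x) (snd x)) \<longlongrightarrow> \<bar>deriv \<psi> z\<bar>) F"
    by (rule tendsto_by_error_bound[OF gradient Mh]) (use bounds in \<open>auto elim: eventually_mono\<close>)
  moreover have "((\<lambda>x. - ux_abs_minus_neg \<psi> (fst x) (snd x)) \<longlongrightarrow> \<bar>deriv \<psi> z\<bar>) F"
    by (rule tendsto_by_error_bound[OF gradient Mh]) (use bounds in \<open>auto elim: eventually_mono\<close>)
  moreover have "((\<lambda>x. uxx \<psi> (fst x) (snd x)) \<longlongrightarrow> (deriv^^2) \<psi> z) F"
    by (rule tendsto_by_error_bound[OF derivs[of 2] Mh2]) (use bounds in \<open>auto elim: eventually_mono\<close>)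
  moreover have "filterlim (\<lambda>x. K (fst x)) at_top F" "filterlim (\<lambda>x. L (fst x)) at_top F"
    unfolding F_def by (auto intro: filterlim_compose[OF K filterlim_fst] filterlim_compose[OF L filterlim_fst])
  ultimately have "((\<lambda>x. scheme_map (K (fst x)) (L (fst x)) (ux_abs_plus \<psi> (fst x) (snd x))
      (- ux_abs_minus_neg \<psi> (fst x) (snd x)) (uxx \<psi> (fst x) (snd x))) \<longlongrightarrow> F1D \<psi> z) F"
    unfolding F1D_eq_root by (rule scheme_map_tendsto)
  then show ?thesis unfolding F_def Fscheme_eq_scheme_map by (simp add: case_prod_unfold)
qed

section \<open>Accuracy\<close>

lemma finite_difference_errors_at:
  fixes f :: "real \<Rightarrow> real"
  assumes "smooth_on f V" "open V" "x \<in> V"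
  obtains M where "M \<ge> 0" "\<forall>\<^sub>F h in at_right 0. finite_difference_errors_le f M h x"
proof -
  obtain d M where "d > 0" "M \<ge> 0"
    and errors: "\<And>y h. 0 < h \<Longrightarrow> \<bar>y - x\<bar> + h < d \<Longrightarrow> finite_difference_errors_le f M h y"
    by (rule finite_difference_errors_locally[OF assms]) (rule that)
  have "\<forall>\<^sub>F h in at_right 0. 0 < h \<and> h < d"
    using \<open>d > 0\<close> by (auto simp: eventually_at_right_field intro!: exI[of _ d])
  then have "\<forall>\<^sub>F h in at_right 0. finite_difference_errors_le f M h x"
    by eventually_elim (intro errors; simp)
  with \<open>M \<ge> 0\<close> show thesis by (rule that)
qed

lemma abs_root3_diff_le:
  assumes "v \<noteq> 0"
  shows "\<bar>root 3 u - root 3 v\<bar> \<le> 4/3 * \<bar>u - v\<bar> / (root 3 v)^2"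
proof -
  define r s where "r = root 3 u" and "s = root 3 v"
  have "s \<noteq> 0" using assms unfolding s_def by simp
  have "u = r^3" "v = s^3" unfolding r_def s_def by (simp_all add: odd_real_root_pow)
  then have u_v: "u - v = (r - s) * (r^2 + r * s + s^2)"
    by (simp add: power2_eq_square power3_eq_cube algebra_simps)
  have quadratic: "r^2 + r * s + s^2 \<ge> 3/4 * s^2"
    using sum_squares_ge_zero[of "r + s/2" 0] by (simp add: power2_eq_square algebra_simps)
  then have "\<bar>u - v\<bar> = \<bar>r - s\<bar> * (r^2 + r * s + s^2)"
    unfolding u_v abs_mult by (simp add: order_trans[OF _ quadratic])
  then have "\<bar>r - s\<bar> * (3/4 * s^2) \<le> \<bar>u - v\<bar>"
    using mult_left_mono[OF quadratic abs_ge_zero[of "r - s"]] by linarith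
  then show ?thesis using \<open>s \<noteq> 0\<close> unfolding r_def[symmetric] s_def[symmetric] by (simp add: field_simps)
qed

lemma abs_sq_mult_diff_le:
  fixes m b P Q e :: real
  assumes "\<bar>m - P\<bar> \<le> e" "0 \<le> P" "0 \<le> m" "m \<le> P + 1" "\<bar>b - Q\<bar> \<le> e" "\<bar>b\<bar> \<le> \<bar>Q\<bar> + 1"
  shows "\<bar>m^2 * b - P^2 * Q\<bar> \<le> e * ((2 * P + 1) * (\<bar>Q\<bar> + 1) + P^2)"
proof -
  have "m^2 * b - P^2 * Q = (m - P) * (m + P) * b + P^2 * (b - Q)"
    by (simp add: algebra_simps power2_eq_square)
  also have "\<bar>\<dots>\<bar> \<le> \<bar>(m - P) * (m + P) * b\<bar> + \<bar>P^2 * (b - Q)\<bar>"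
    by (rule abs_triangle_ineq)
  also have "\<dots> = \<bar>m - P\<bar> * (m + P) * \<bar>b\<bar> + P^2 * \<bar>b - Q\<bar>"
    using assms(2,3) by (simp add: abs_mult)
  also have "\<dots> \<le> e * (2 * P + 1) * (\<bar>Q\<bar> + 1) + P^2 * e"
  proof (rule add_mono)
    have "\<bar>m - P\<bar> * (m + P) \<le> e * (2 * P + 1)"
      using assms by (intro mult_mono) auto
    then show "\<bar>m - P\<bar> * (m + P) * \<bar>b\<bar> \<le> e * (2 * P + 1) * (\<bar>Q\<bar> + 1)"
      using assms by (intro mult_mono) auto
    show "P^2 * \<bar>b - Q\<bar> \<le> P^2 * e"
      using assms by (intro mult_left_mono) auto
  qed
  finally show ?thesis by (simp add: algebra_simps)
qed

lemma ux_abs_nonneg: "0 \<le> ux_abs_plus u h y" "0 \<le> - ux_abs_minus_neg u h y"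
  unfolding ux_abs_plus_def ux_abs_minus_neg_def by auto

lemma abs_root3_sq_mult_diff_le:
  assumes "p \<noteq> 0" "q \<noteq> 0" "\<bar>m - \<bar>p\<bar>\<bar> \<le> e" "0 \<le> m" "m \<le> \<bar>p\<bar> + 1" "\<bar>b - q\<bar> \<le> e" "\<bar>b\<bar> \<le> \<bar>q\<bar> + 1"
  shows "\<bar>root 3 (m^2 * b) - root 3 (p^2 * q)\<bar>
    \<le> 4/3 * ((2 * \<bar>p\<bar> + 1) * (\<bar>q\<bar> + 1) + p^2) / (root 3 (p^2 * q))^2 * e"
proof -
  have "\<bar>root 3 (m^2 * b) - root 3 (p^2 * q)\<bar> \<le> 4/3 * \<bar>m^2 * b - \<bar>p\<bar>^2 * q\<bar> / (root 3 (p^2 * q))^2"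
    using abs_root3_diff_le[of "p^2 * q" "m^2 * b"] assms(1,2) by simp
  also have "\<dots> \<le> 4/3 * (e * ((2 * \<bar>p\<bar> + 1) * (\<bar>q\<bar> + 1) + \<bar>p\<bar>^2)) / (root 3 (p^2 * q))^2"
    using abs_sq_mult_diff_le[of m "\<bar>p\<bar>" e b q] assms by (intro divide_right_mono mult_left_mono) auto
  finally show ?thesis by (simp add: algebra_simps)
qed

lemma Fscheme_error_regular:
  assumes "smooth_on \<phi> V" "open V" "x \<in> V" and p: "deriv \<phi> x \<noteq> 0" and q: "(deriv^^2) \<phi> x \<noteq> 0"
    and K: "filterlim K at_top (at_right 0)" and L: "filterlim L at_top (at_right 0)"
  shows "(\<lambda>h. Fscheme (K h) (L h) h \<phi> x - F1D \<phi> x) \<in> O[at_right 0](\<lambda>h. h)"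
proof -
  define p q where "p = deriv \<phi> x" and "q = (deriv^^2) \<phi> x"
  define mp mm b where "mp h = ux_abs_plus \<phi> h x" and "mm h = - ux_abs_minus_neg \<phi> h x"
    and "b h = uxx \<phi> h x" for h
  define m where "m h = (if q < 0 then mp h else mm h)" for h
  obtain M where "M \<ge> 0" and "\<forall>\<^sub>F h in at_right 0. finite_difference_errors_le \<phi> M h x"
    by (rule finite_difference_errors_at[OF assms(1-3)]) (rule that)
  note errors = this(2)[unfolded finite_difference_errors_le_def, folded p_def q_def mp_def mm_def b_def]
  have "p \<noteq> 0" "q \<noteq> 0" using p q unfolding p_def q_def .
  have Mh: "((\<lambda>h. M * h) \<longlongrightarrow> 0) (at_right 0)" and Mh2: "((\<lambda>h. M * h^2) \<longlongrightarrow> 0) (at_right 0)"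
    by (auto intro!: tendsto_eq_intros)
  have "(mp \<longlongrightarrow> \<bar>p\<bar>) (at_right 0)" "(mm \<longlongrightarrow> \<bar>p\<bar>) (at_right 0)" "(b \<longlongrightarrow> q) (at_right 0)"
    by (rule tendsto_by_error_bound[OF tendsto_const Mh] tendsto_by_error_bound[OF tendsto_const Mh2],
        use errors in \<open>auto elim: eventually_mono\<close>)+
  note limits = this
  have "(m \<longlongrightarrow> \<bar>p\<bar>) (at_right 0)" unfolding m_def using limits by (cases "q < 0") simp_all
  from eventually_near_nonzero_limit[OF this] eventually_near_nonzero_limit[OF limits(3)]
  have bounded: "\<forall>\<^sub>F h in at_right 0. m h \<le> \<bar>p\<bar> + 1 \<and> \<bar>b h\<bar> \<le> \<bar>q\<bar> + 1"
    using \<open>p \<noteq> 0\<close> \<open>q \<noteq> 0\<close> by (auto elim: eventually_elim2)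
  have unclipped: "\<forall>\<^sub>F h in at_right 0. scheme_map (K h) (L h) (mp h) (mm h) (b h) = root 3 ((m h)^2 * b h)"
    using scheme_map_eventually_unclipped[OF limits K L \<open>p \<noteq> 0\<close> \<open>q \<noteq> 0\<close>] unfolding m_def .
  define C where "C = 4/3 * ((2 * \<bar>p\<bar> + 1) * (\<bar>q\<bar> + 1) + p^2) / (root 3 (p^2 * q))^2"
  have "\<forall>\<^sub>F h in at_right 0. 0 < h \<and> h < (1::real)"
    by (auto simp: eventually_at_right_field intro!: exI[of _ 1])
  with errors bounded unclipped
  have "\<forall>\<^sub>F h in at_right 0. \<bar>Fscheme (K h) (L h) h \<phi> x - F1D \<phi> x\<bar> \<le> C * M * \<bar>h\<bar>"
  proof eventually_elim
    case (elim h)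
    have "M * h^2 \<le> M * h" using elim \<open>M \<ge> 0\<close> by (intro mult_left_mono) (auto simp: power2_eq_square)
    moreover have "\<bar>m h - \<bar>p\<bar>\<bar> \<le> M * h" "0 \<le> m h"
      using elim ux_abs_nonneg unfolding m_def mp_def mm_def by auto
    ultimately have "\<bar>root 3 ((m h)^2 * b h) - root 3 (p^2 * q)\<bar> \<le> C * (M * h)"
      unfolding C_def using elim \<open>p \<noteq> 0\<close> \<open>q \<noteq> 0\<close> by (intro abs_root3_sq_mult_diff_le) auto
    then show ?case using elim
      unfolding Fscheme_eq_scheme_map F1D_eq_root mp_def[symmetric] mm_def[symmetric] b_def[symmetric]
        p_def[symmetric] q_def[symmetric] by (simp add: mult.assoc)
  qed
  then show ?thesis by (intro bigoI) simp
qed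

lemma Fscheme_error_flat_gradient:
  assumes "smooth_on \<phi> V" "open V" "x \<in> V" and "deriv \<phi> x = 0"
    and KL: "\<forall>\<^sub>F h in at_right 0. 0 \<le> K h \<and> 0 \<le> L h"
  shows "(\<lambda>h. Fscheme (K h) (L h) h \<phi> x - F1D \<phi> x) \<in> O[at_right 0](\<lambda>h. K h * h)"
proof -
  obtain M where "M \<ge> 0" and "\<forall>\<^sub>F h in at_right 0. finite_difference_errors_le \<phi> M h x"
    by (rule finite_difference_errors_at[OF assms(1-3)]) (rule that)
  note errors = this(2)[unfolded finite_difference_errors_le_def]
  from errors KL eventually_at_right_less[of 0]
  have "\<forall>\<^sub>F h in at_right 0. \<bar>Fscheme (K h) (L h) h \<phi> x - F1D \<phi> x\<bar> \<le> (2 * M) * \<bar>K h * h\<bar>"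
  proof eventually_elim
    case (elim h)
    have "\<bar>Fscheme (K h) (L h) h \<phi> x\<bar> \<le> K h * \<bar>ux_abs_plus \<phi> h x\<bar> + K h * \<bar>- ux_abs_minus_neg \<phi> h x\<bar>"
      unfolding Fscheme_eq_scheme_map using elim by (intro abs_scheme_map_le) auto
    also have "\<dots> \<le> K h * (M * h) + K h * (M * h)"
      using elim \<open>deriv \<phi> x = 0\<close> ux_abs_nonneg by (intro add_mono mult_left_mono) auto
    finally show ?case using elim \<open>deriv \<phi> x = 0\<close> by (simp add: F1D_eq_root abs_mult mult_ac)
  qed
  then show ?thesis by (intro bigoI[where c = "2 * M"]) simp
qed

lemma Fscheme_error_flat_curvature:
  assumes "smooth_on \<phi> V" "open V" "x \<in> V" and "(deriv^^2) \<phi> x = 0"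
    and KL: "\<forall>\<^sub>F h in at_right 0. 0 \<le> K h \<and> 0 \<le> L h"
  shows "(\<lambda>h. Fscheme (K h) (L h) h \<phi> x - F1D \<phi> x) \<in> O[at_right 0](\<lambda>h. L h * h^2)"
proof -
  obtain M where "M \<ge> 0" and "\<forall>\<^sub>F h in at_right 0. finite_difference_errors_le \<phi> M h x"
    by (rule finite_difference_errors_at[OF assms(1-3)]) (rule that)
  note errors = this(2)[unfolded finite_difference_errors_le_def]
  from errors KL
  have "\<forall>\<^sub>F h in at_right 0. \<bar>Fscheme (K h) (L h) h \<phi> x - F1D \<phi> x\<bar> \<le> (2 * M) * \<bar>L h * h^2\<bar>"
  proof eventually_elim
    case (elim h)
    have "\<bar>Fscheme (K h) (L h) h \<phi> x\<bar> \<le> 2 * L h * \<bar>uxx \<phi> h x\<bar>"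
      unfolding Fscheme_eq_scheme_map using elim by (intro abs_scheme_map_le) auto
    also have "\<dots> \<le> 2 * L h * (M * h^2)"
      using elim \<open>(deriv^^2) \<phi> x = 0\<close> by (intro mult_left_mono) auto
    finally show ?case using elim \<open>(deriv^^2) \<phi> x = 0\<close> by (simp add: F1D_eq_root abs_mult mult_ac)
  qed
  then show ?thesis by (intro bigoI[where c = "2 * M"]) simp
qed

lemma bigo_mult_power_at_right_0:
  fixes K :: "real \<Rightarrow> real"
  assumes "K \<in> O[at_right 0](\<lambda>h. h powr - a)"
  shows "(\<lambda>h. K h * h ^ n) \<in> O[at_right 0](\<lambda>h. h powr (real n - a))"
proof -
  have "\<forall>\<^sub>F h in at_right 0. h powr - a * h ^ n = h powr (real n - a)"
    using eventually_at_right_less[of 0] by eventually_elim (simp add: powr_realpow[symmetric] powr_add[symmetric])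
  then have "O[at_right 0](\<lambda>h. h powr - a * h ^ n) = O[at_right 0](\<lambda>h. h powr (real n - a))"
    by (rule landau_o.big.cong)
  with landau_o.big.mult_right[OF assms, of "\<lambda>h. h ^ n"] show ?thesis by simp
qed

lemma bigo_id_powr_at_right_0:
  assumes "a \<le> 1"
  shows "(\<lambda>h::real. h) \<in> O[at_right 0](\<lambda>h. h powr a)"
proof -
  have "\<forall>\<^sub>F h in at_right 0. 0 < h \<and> h < (1::real)"
    by (auto simp: eventually_at_right_field intro!: exI[of _ 1])
  then have "\<forall>\<^sub>F h in at_right 0. norm h \<le> norm (h powr a)"
    by eventually_elim (use powr_mono'[OF assms, of h for h] in auto)
  then show ?thesis by (rule landau_o.big_mono)
qed

lemma bigo_powr_le_powr_sum:
  "(\<lambda>h::real. h powr a) \<in> O[F](\<lambda>h. h powr a + h powr b)"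
  "(\<lambda>h::real. h powr b) \<in> O[F](\<lambda>h. h powr a + h powr b)"
  by (intro landau_o.big_mono always_eventually allI; simp)+

lemma Fscheme_error_bigo:
  assumes sm: "smooth_on \<phi> V" "open V" "x \<in> V"
    and K: "filterlim K at_top (at_right 0)" "K \<in> O[at_right 0](\<lambda>h. h powr - \<alpha>)"
    and L: "filterlim L at_top (at_right 0)" "L \<in> O[at_right 0](\<lambda>h. h powr - \<beta>)"
    and "0 \<le> \<alpha>"
  shows "(\<lambda>h. Fscheme (K h) (L h) h \<phi> x - F1D \<phi> x) \<in> O[at_right 0](\<lambda>h. h powr (1 - \<alpha>) + h powr (2 - \<beta>))"
proof -
  have KL: "\<forall>\<^sub>F h in at_right 0. 0 \<le> K h \<and> 0 \<le> L h"
    using K(1) L(1) unfolding filterlim_at_top by (auto intro: eventually_conj)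
  note to_sum = bigo_powr_le_powr_sum[where a = "1 - \<alpha>" and b = "2 - \<beta>" and F = "at_right 0"]
  consider (flat_gradient) "deriv \<phi> x = 0" | (flat_curvature) "(deriv^^2) \<phi> x = 0"
    | (regular) "deriv \<phi> x \<noteq> 0" "(deriv^^2) \<phi> x \<noteq> 0" by blast
  then show ?thesis
  proof cases
    case flat_gradient
    have "(\<lambda>h. K h * h) \<in> O[at_right 0](\<lambda>h. h powr (1 - \<alpha>))"
      using bigo_mult_power_at_right_0[OF K(2), of 1] by simp
    with Fscheme_error_flat_gradient[OF sm flat_gradient KL] to_sum(1) show ?thesis
      by (blast intro: landau_o.big_trans)
  next
    case flat_curvature
    have "(\<lambda>h. L h * h^2) \<in> O[at_right 0](\<lambda>h. h powr (2 - \<beta>))"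
      using bigo_mult_power_at_right_0[OF L(2), of 2] by simp
    with Fscheme_error_flat_curvature[OF sm flat_curvature KL] to_sum(2) show ?thesis
      by (blast intro: landau_o.big_trans)
  next
    case regular
    have "(\<lambda>h. h) \<in> O[at_right 0](\<lambda>h. h powr (1 - \<alpha>))"
      using \<open>0 \<le> \<alpha>\<close> by (intro bigo_id_powr_at_right_0) simp
    with Fscheme_error_regular[OF sm regular K(1) L(1)] to_sum(1) show ?thesis
      by (blast intro: landau_o.big_trans)
  qed
qed

lemma filterlim_powr_neg_at_right_0:
  fixes a :: real
  assumes "0 < a"
  shows "filterlim (\<lambda>h::real. h powr - a) at_top (at_right 0)"
proof -
  have "filterlim (\<lambda>h::real. inverse h powr a) at_top (at_right 0)"
    by (rule filterlim_compose[OF real_powr_at_top[OF assms] filterlim_inverse_at_top_right])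
  then show ?thesis by (simp add: inverse_powr powr_minus)
qed

lemma bigtheta_powr_neg_imp_at_top:
  fixes K :: "real \<Rightarrow> real"
  assumes "\<forall>h>0. K h > 0" "0 < a" "K \<in> \<Theta>[at_right 0](\<lambda>h. h powr - a)"
  shows "filterlim K at_top (at_right 0)"
proof -
  from bigthetaD2[OF assms(3)] obtain c where "c > 0"
    and lower: "\<forall>\<^sub>F h in at_right 0. norm (K h) \<ge> c * norm (h powr - a)"
    by (elim landau_omega.bigE) auto
  from lower eventually_at_right_less[of 0] have "\<forall>\<^sub>F h in at_right 0. c * h powr - a \<le> K h"
    by eventually_elim (use assms(1) in auto)
  moreover have "filterlim (\<lambda>h. c * h powr - a) at_top (at_right 0)"
    using filterlim_tendsto_pos_mult_at_top[OF tendsto_const \<open>c > 0\<close> filterlim_powr_neg_at_right_0[OF assms(2)]] .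
  ultimately show ?thesis using filterlim_at_top_mono by blast
qed

lemma acc_order_optimum:
  "(\<forall>a b. 0 < a \<and> a < 1 \<and> 0 < b \<and> b < 2 \<longrightarrow>
        acc_order a b \<le> acc_order (1/3) (4/3)
        \<and> (acc_order a b = acc_order (1/3) (4/3) \<longrightarrow> a = 1/3 \<and> b = 4/3))
   \<and> acc_order (1/3) (4/3) = 2/3"
  unfolding acc_order_def by (auto simp: min_def)

theorem mainTheorem11:
  fixes \<phi> :: "real \<Rightarrow> real" and U :: "real set" and x :: real
    and K L :: "real \<Rightarrow> real" and \<alpha> \<beta> :: real
  assumes x_in: "x \<in> {-1<..<1}"
    and U_open: "open U" and x_U: "x \<in> U" and \<phi>_smooth: "smooth_on \<phi> U"
    and \<alpha>_range: "0 < \<alpha>" "\<alpha> < 1" and \<beta>_range: "0 < \<beta>" "\<beta> < 2"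
    and K_pos: "\<forall>h>0. K h > 0" and L_pos: "\<forall>h>0. L h > 0"
    and K_order: "K \<in> \<Theta>[at_right 0](\<lambda>h. h powr (-\<alpha>))"
    and L_order: "L \<in> \<Theta>[at_right 0](\<lambda>h. h powr (-\<beta>))"
    and KL: "\<forall>h>0. K h * sqrt (L h) \<ge> 1"
  shows
    "(\<forall>\<psi> V z. open V \<and> z \<in> V \<and> z \<in> {-1<..<1} \<and> smooth_on \<psi> V \<longrightarrow>
        ((\<lambda>(h, y). Fscheme (K h) (L h) h \<psi> y) \<longlongrightarrow> F1D \<psi> z) (at_right 0 \<times>\<^sub>F nhds z))
   \<and> (\<lambda>h. Fscheme (K h) (L h) h \<phi> x - F1D \<phi> x)
        \<in> O[at_right 0](\<lambda>h. h powr (1 - \<alpha>) + h powr (2 - \<beta>) + h powr (min (2 * \<alpha>) (\<beta> / 2)))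
   \<and> (\<forall>a b. 0 < a \<and> a < 1 \<and> 0 < b \<and> b < 2 \<longrightarrow>
        acc_order a b \<le> acc_order (1/3) (4/3)
        \<and> (acc_order a b = acc_order (1/3) (4/3) \<longrightarrow> a = 1/3 \<and> b = 4/3))
   \<and> acc_order (1/3) (4/3) = 2/3
   \<and> (\<alpha> = 1/3 \<and> \<beta> = 4/3 \<longrightarrow>
        (\<lambda>h. Fscheme (K h) (L h) h \<phi> x - F1D \<phi> x) \<in> O[at_right 0](\<lambda>h. h powr (2/3)))"
proof -
  have K_top: "filterlim K at_top (at_right 0)" and L_top: "filterlim L at_top (at_right 0)"
    using bigtheta_powr_neg_imp_at_top K_pos L_pos \<alpha>_range \<beta>_range K_order L_order by auto
  have error: "(\<lambda>h. Fscheme (K h) (L h) h \<phi> x - F1D \<phi> x) \<in> O[at_right 0](\<lambda>h. h powr (1 - \<alpha>) + h powr (2 - \<beta>))"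
    using Fscheme_error_bigo[OF \<phi>_smooth U_open x_U K_top bigthetaD1[OF K_order] L_top bigthetaD1[OF L_order]]
      \<alpha>_range by simp
  moreover have "(\<lambda>h. h powr (1 - \<alpha>) + h powr (2 - \<beta>))
      \<in> O[at_right 0](\<lambda>h. h powr (1 - \<alpha>) + h powr (2 - \<beta>) + h powr (min (2 * \<alpha>) (\<beta> / 2)))"
    by (intro landau_o.big_mono always_eventually allI) simp
  moreover have "\<alpha> = 1/3 \<and> \<beta> = 4/3 \<longrightarrow>
      (\<lambda>h. Fscheme (K h) (L h) h \<phi> x - F1D \<phi> x) \<in> O[at_right 0](\<lambda>h. h powr (2/3))"
  proof
    assume "\<alpha> = 1/3 \<and> \<beta> = 4/3"
    then have "1 - \<alpha> = 2/3" "2 - \<beta> = 2/3" by simp_all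
    with error have "(\<lambda>h. Fscheme (K h) (L h) h \<phi> x - F1D \<phi> x) \<in> O[at_right 0](\<lambda>h. h powr (2/3) + h powr (2/3))"
      by (simp only:)
    moreover have "(\<lambda>h::real. h powr (2/3) + h powr (2/3)) \<in> O[at_right 0](\<lambda>h. h powr (2/3))"
      by (intro bigoI[where c = 2] always_eventually allI) simp
    ultimately show "(\<lambda>h. Fscheme (K h) (L h) h \<phi> x - F1D \<phi> x) \<in> O[at_right 0](\<lambda>h. h powr (2/3))"
      by (rule landau_o.big_trans)
  qed
  ultimately show ?thesis
    using Fscheme_tendsto_F1D[OF _ _ _ K_top L_top] acc_order_optimum
    by (blast intro: landau_o.big_trans)
qed

end
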